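(* Let $A_0$ be a group with finite presentation $\langle\mathcal A:\mathcal R\rangle$, let $q:F(\mathcal A)\to A_0$ be the quotient map with $q(a)=a$, and let $\phi_0:A_0\to A_0$ be a homomorphism with nontrivial kernel $K_0$ and $\phi:F(\mathcal A)\to F(\mathcal A)$ a homomorphism such that $q\circ\phi=\phi_0\circ q$. If the ascending sequence $K_i=\phi_0^{-i}(K_0)=\ker(\phi_0^{i+1})$ of normal subgroups of $A_0$ does not stabilize (in particular, when $\phi_0$ is an epimorphism), then the group $G$ with ascending HNN presentation $\mathcal P=\langle t,\mathcal A:\mathcal R,\ t^{-1}at=\phi(a)\ \text{for all } a\in\mathcal A\rangle$ has unbounded depth.
   Context: $F(\mathcal A)$ is the free group on the finite set $\mathcal A$. Let $N_0=N(\bigcup_{j\ge0}\phi^j(\mathcal R))$ be the normal closure in $F(\mathcal A)$ of $\bigcup_{j\ge 0}\phi^j(\mathcal R)$ and $N^\infty=\bigcup_{i\ge0}\phi^{-i}(N_0)$. The presentation $\mathcal P$ has bounded depth if $N^\infty=\bigcup_{i=0}^B\phi^{-i}(N_0)$ for some integer $B\ge0$, and unbounded depth otherwise. *)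

theory Defs
  imports "HOL-Algebra.Algebra"
begin

text \<open>Free group F(A) on a set A, realised concretely as reduced words.
A letter (a, True) stands for a, the letter (a, False) for a inverse.\<close>

fun free_reduce :: "('a \<times> bool) list \<Rightarrow> ('a \<times> bool) list" where
  "free_reduce [] = []"
| "free_reduce (x # xs) =
     (case free_reduce xs of
        [] \<Rightarrow> [x]
      | y # ys \<Rightarrow> (if fst x = fst y \<and> snd x \<noteq> snd y then ys else x # y # ys))"

definition free_group :: "'a set \<Rightarrow> ('a \<times> bool) list monoid" where
  "free_group A = \<lparr> carrier = {w. set w \<subseteq> A \<times> UNIV \<and> free_reduce w = w},
                    monoid.mult = (\<lambda>x y. free_reduce (x @ y)),
                    one = [] \<rparr>"

definition normal_closure :: "('a, 'm) monoid_scheme \<Rightarrow> 'a set \<Rightarrow> 'a set" where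
  "normal_closure G S = \<Inter> {H. H \<lhd> G \<and> S \<subseteq> H}"

definition depth_N0 :: "'a set \<Rightarrow> ('a \<times> bool) list set \<Rightarrow>
      (('a \<times> bool) list \<Rightarrow> ('a \<times> bool) list) \<Rightarrow> ('a \<times> bool) list set" where
  "depth_N0 A R \<phi> = normal_closure (free_group A) (\<Union>j. (\<phi> ^^ j) ` R)"

definition depth_layer :: "'a set \<Rightarrow> ('a \<times> bool) list set \<Rightarrow>
      (('a \<times> bool) list \<Rightarrow> ('a \<times> bool) list) \<Rightarrow> nat \<Rightarrow> ('a \<times> bool) list set" where
  "depth_layer A R \<phi> i = {x \<in> carrier (free_group A). (\<phi> ^^ i) x \<in> depth_N0 A R \<phi>}"

definition depth_Ninf :: "'a set \<Rightarrow> ('a \<times> bool) list set \<Rightarrow>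
      (('a \<times> bool) list \<Rightarrow> ('a \<times> bool) list) \<Rightarrow> ('a \<times> bool) list set" where
  "depth_Ninf A R \<phi> = (\<Union>i. depth_layer A R \<phi> i)"

definition bounded_depth :: "'a set \<Rightarrow> ('a \<times> bool) list set \<Rightarrow>
      (('a \<times> bool) list \<Rightarrow> ('a \<times> bool) list) \<Rightarrow> bool" where
  "bounded_depth A R \<phi> \<longleftrightarrow> (\<exists>B::nat. depth_Ninf A R \<phi> = (\<Union>i\<in>{0..B}. depth_layer A R \<phi> i))"

abbreviation unbounded_depth where
  "unbounded_depth A R \<phi> \<equiv> \<not> bounded_depth A R \<phi>"

end

theory Submission
  imports Defs
begin

text \<open>Since \<open>q \<circ> \<phi> = \<phi>\<^sub>0 \<circ> q\<close>, the kernel of \<open>q\<close> is \<open>\<phi>\<close>-invariant, so adding the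
iterates \<open>\<phi>\<^sup>j(R)\<close> does not enlarge the normal closure: \<open>N\<^sub>0 = ker q\<close>. Consequently the
layer \<open>\<phi>\<^sup>-\<^sup>i(N\<^sub>0)\<close> is the preimage under the surjection \<open>q\<close> of \<open>ker \<phi>\<^sub>0\<^sup>i\<close>. If the
union of the layers were reached at stage \<open>B\<close>, every \<open>ker \<phi>\<^sub>0\<^sup>m\<close> would lie in
\<open>ker \<phi>\<^sub>0\<^sup>B\<close>, so the chain of kernels would stabilize.\<close>

lemma normal_closure_eq_if_subset:
  assumes "S \<subseteq> T" and "T \<subseteq> normal_closure G S"
  shows "normal_closure G T = normal_closure G S"
  using assms unfolding normal_closure_def by blast

lemma funpow_closed:
  "(\<And>x. x \<in> S \<Longrightarrow> f x \<in> S) \<Longrightarrow> x \<in> S \<Longrightarrow> (f ^^ k) x \<in> S"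
  by (induction k) auto

lemma funpow_hom:
  assumes "f \<in> hom G G"
  shows "f ^^ k \<in> hom G G"
proof (induction k)
  case 0
  show ?case by (simp add: hom_def)
next
  case (Suc k)
  then show ?case
    using assms by (auto simp: hom_def Pi_def)
qed

lemma funpow_semiconj:
  assumes "\<And>x. x \<in> S \<Longrightarrow> f x \<in> S" and "\<And>x. x \<in> S \<Longrightarrow> q (f x) = g (q x)"
    and "x \<in> S"
  shows "q ((f ^^ k) x) = (g ^^ k) (q x)"
  using assms(3) by (induction k) (auto simp: assms(2) funpow_closed[OF assms(1)])

lemma funpow_hom_one:
  assumes "group G" and "f \<in> hom G G"
  shows "(f ^^ k) \<one>\<^bsub>G\<^esub> = \<one>\<^bsub>G\<^esub>"
  using hom_one[OF assms(2,1,1)] by (induction k) simp_all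

lemma kernel_funpow_mono:
  assumes "group G" and "f \<in> hom G G" and "i \<le> j"
  shows "kernel G G (f ^^ i) \<subseteq> kernel G G (f ^^ j)"
proof -
  have "f ^^ j = f ^^ (j - i) \<circ> f ^^ i"
    using assms(3) by (simp flip: funpow_add)
  then show ?thesis
    unfolding kernel_def by (simp add: funpow_hom_one[OF assms(1,2)] subset_iff)
qed

lemma kernel_funpow_Suc:
  assumes "f \<in> hom G G"
  shows "{x \<in> carrier G. (f ^^ m) x \<in> kernel G G f} = kernel G G (f ^^ Suc m)"
proof -
  have "(f ^^ m) x \<in> carrier G" if "x \<in> carrier G" for x
    by (rule funpow_closed[OF _ that]) (use assms in \<open>auto simp: hom_def\<close>)
  then show ?thesis
    unfolding kernel_def by auto
qed

lemma preimage_UN_bounded_imp_subset: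
  assumes surj: "q ` S = Y"
    and bounded: "(\<Union>i. {x \<in> S. q x \<in> K i}) = (\<Union>i\<in>{0..B}. {x \<in> S. q x \<in> K i})"
    and sub: "K m \<subseteq> Y" and mono: "\<And>i. i \<le> B \<Longrightarrow> K i \<subseteq> K B"
  shows "K m \<subseteq> K B"
proof
  fix y assume "y \<in> K m"
  then obtain x where x: "x \<in> S" "y = q x" "q x \<in> K m"
    using sub surj by blast
  then have "x \<in> (\<Union>i\<in>{0..B}. {x \<in> S. q x \<in> K i})"
    using bounded by blast
  then obtain i where "i \<le> B" "q x \<in> K i"
    by auto
  then show "y \<in> K B"
    using mono x(2) by blast
qed

context
  fixes A :: "'a set" and R :: "('a \<times> bool) list set"
    and A0 :: "'b monoid" and q :: "('a \<times> bool) list \<Rightarrow> 'b"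
    and \<phi>0 :: "'b \<Rightarrow> 'b" and \<phi> :: "('a \<times> bool) list \<Rightarrow> ('a \<times> bool) list"
  assumes A0: "group A0"
    and q_hom: "q \<in> hom (free_group A) A0"
    and q_kernel: "kernel (free_group A) A0 q = normal_closure (free_group A) R"
    and \<phi>0_hom: "\<phi>0 \<in> hom A0 A0"
    and \<phi>_hom: "\<phi> \<in> hom (free_group A) (free_group A)"
    and semiconj: "\<forall>x\<in>carrier (free_group A). q (\<phi> x) = \<phi>0 (q x)"
begin

lemma q_funpow: "x \<in> carrier (free_group A) \<Longrightarrow> q ((\<phi> ^^ k) x) = (\<phi>0 ^^ k) (q x)"
  by (rule funpow_semiconj) (use \<phi>_hom semiconj in \<open>auto simp: hom_def Pi_def\<close>)

lemma funpow_kernel_closed: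
  assumes "x \<in> kernel (free_group A) A0 q"
  shows "(\<phi> ^^ j) x \<in> kernel (free_group A) A0 q"
proof -
  from assms have x: "x \<in> carrier (free_group A)" "q x = \<one>\<^bsub>A0\<^esub>"
    by (simp_all add: kernel_def)
  have "(\<phi> ^^ j) x \<in> carrier (free_group A)"
    by (rule hom_in_carrier[OF funpow_hom[OF \<phi>_hom] x(1)])
  moreover have "q ((\<phi> ^^ j) x) = \<one>\<^bsub>A0\<^esub>"
    using q_funpow[OF x(1)] x(2) funpow_hom_one[OF A0 \<phi>0_hom] by simp
  ultimately show ?thesis
    by (simp add: kernel_def)
qed

lemma depth_N0_eq_kernel: "depth_N0 A R \<phi> = kernel (free_group A) A0 q"
proof -
  have "R \<subseteq> normal_closure (free_group A) R"
    unfolding normal_closure_def by blast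
  then have "(\<phi> ^^ j) ` R \<subseteq> normal_closure (free_group A) R" for j
    using funpow_kernel_closed unfolding q_kernel by blast
  then have "(\<Union>j. (\<phi> ^^ j) ` R) \<subseteq> normal_closure (free_group A) R"
    by (rule UN_least)
  moreover have "R \<subseteq> (\<Union>j. (\<phi> ^^ j) ` R)"
    using UN_upper[of 0 UNIV "\<lambda>j. (\<phi> ^^ j) ` R"] by simp
  ultimately show ?thesis
    unfolding depth_N0_def q_kernel by (rule normal_closure_eq_if_subset[rotated])
qed

lemma depth_layer_eq_preimage:
  "depth_layer A R \<phi> i = {x \<in> carrier (free_group A). q x \<in> kernel A0 A0 (\<phi>0 ^^ i)}"
  using funpow_hom[OF \<phi>_hom] q_hom q_funpow
  by (auto simp: depth_layer_def depth_N0_eq_kernel kernel_def hom_def Pi_def)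

lemma bounded_depth_imp_kernels_stable:
  assumes surj: "q ` carrier (free_group A) = carrier A0" and "bounded_depth A R \<phi>"
  obtains B where "\<And>m. kernel A0 A0 (\<phi>0 ^^ m) \<subseteq> kernel A0 A0 (\<phi>0 ^^ B)"
proof -
  obtain B where "depth_Ninf A R \<phi> = (\<Union>i\<in>{0..B}. depth_layer A R \<phi> i)"
    using assms(2) unfolding bounded_depth_def by blast
  then have bounded: "(\<Union>i. {x \<in> carrier (free_group A). q x \<in> kernel A0 A0 (\<phi>0 ^^ i)})
      = (\<Union>i\<in>{0..B}. {x \<in> carrier (free_group A). q x \<in> kernel A0 A0 (\<phi>0 ^^ i)})"
    by (simp only: depth_Ninf_def depth_layer_eq_preimage)
  have "kernel A0 A0 (\<phi>0 ^^ m) \<subseteq> kernel A0 A0 (\<phi>0 ^^ B)" for m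
    by (rule preimage_UN_bounded_imp_subset[OF surj bounded _ kernel_funpow_mono[OF A0 \<phi>0_hom]])
       (auto simp: kernel_def)
  then show thesis ..
qed

end

theorem theorem4p5:
  fixes A :: "'a set" and R :: "('a \<times> bool) list set"
    and A0 :: "'b monoid" and q :: "('a \<times> bool) list \<Rightarrow> 'b"
    and \<phi>0 :: "'b \<Rightarrow> 'b" and \<phi> :: "('a \<times> bool) list \<Rightarrow> ('a \<times> bool) list"
  assumes "finite A" and "finite R" and "R \<subseteq> carrier (free_group A)"
    and "group A0"
    and "q \<in> hom (free_group A) A0"
    and "q ` carrier (free_group A) = carrier A0"
    and "kernel (free_group A) A0 q = normal_closure (free_group A) R"
    and "\<phi>0 \<in> hom A0 A0"
    and "kernel A0 A0 \<phi>0 \<noteq> {\<one>\<^bsub>A0\<^esub>}"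
    and "\<phi> \<in> hom (free_group A) (free_group A)"
    and "\<forall>x\<in>carrier (free_group A). q (\<phi> x) = \<phi>0 (q x)"
    and "\<not> (\<exists>n. \<forall>m\<ge>n.
            {x \<in> carrier A0. (\<phi>0 ^^ m) x \<in> kernel A0 A0 \<phi>0}
          = {x \<in> carrier A0. (\<phi>0 ^^ n) x \<in> kernel A0 A0 \<phi>0})"
  shows "unbounded_depth A R \<phi>"
proof
  assume "bounded_depth A R \<phi>"
  then obtain B where B: "\<And>m. kernel A0 A0 (\<phi>0 ^^ m) \<subseteq> kernel A0 A0 (\<phi>0 ^^ B)"
    using bounded_depth_imp_kernels_stable assms(4-8,10,11) by blast
  have "kernel A0 A0 (\<phi>0 ^^ Suc m) = kernel A0 A0 (\<phi>0 ^^ Suc B)" if "B \<le> m" for m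
    using B[of "Suc m"] kernel_funpow_mono[OF assms(4,8), of B "Suc B"]
      kernel_funpow_mono[OF assms(4,8), of "Suc B" "Suc m"] that
    by auto
  then show False
    using assms(12) unfolding kernel_funpow_Suc[OF assms(8)] by blast
qed

end
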